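(* Let $G$ be a connected graph of order $n\ge 2$. (a) If $O_{\rm SR}(G)=\mathcal{M}$, then $\textnormal{sdim}(G)\le\lfloor n/2\rfloor$. (b) If $\textnormal{sdim}(G)\ge\lceil n/2\rceil+1$, then $O_{\rm SR}(G)=\mathcal{B}$.
   Context: All graphs are finite, simple and undirected. A set $S\subseteq V(G)$ is a strong resolving set of a connected graph $G$ if for all distinct $x,y\in V(G)$ there exists $z\in S$ such that $x$ lies on a $y$–$z$ geodesic or $y$ lies on an $x$–$z$ geodesic; $\textnormal{sdim}(G)$ is the minimum cardinality of a strong resolving set. The Maker–Breaker strong resolving game on $G$: Maker and Breaker alternately select a not-yet-chosen vertex of $G$; Maker wins if the vertices he selects contain a strong resolving set of $G$, Breaker wins otherwise. In the M-game Maker moves first, in the B-game Breaker moves first. $O_{\rm SR}(G)=\mathcal{M}$ if Maker has a winning strategy in both games, $\mathcal{B}$ if Breaker has a winning strategy in both, and $\mathcal{N}$ if the first player has a winning strategy in each. *)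

theory Defs
  imports Complex_Main
begin

definition graph :: "'a set \<Rightarrow> ('a \<Rightarrow> 'a \<Rightarrow> bool) \<Rightarrow> bool" where
  "graph V E \<longleftrightarrow> finite V \<and> (\<forall>x y. E x y \<longrightarrow> x \<in> V \<and> y \<in> V)
     \<and> (\<forall>x y. E x y \<longrightarrow> E y x) \<and> (\<forall>x. \<not> E x x)"

definition walk :: "'a set \<Rightarrow> ('a \<Rightarrow> 'a \<Rightarrow> bool) \<Rightarrow> 'a list \<Rightarrow> bool" where
  "walk V E xs \<longleftrightarrow> xs \<noteq> [] \<and> set xs \<subseteq> V \<and> (\<forall>i. Suc i < length xs \<longrightarrow> E (xs ! i) (xs ! Suc i))"

definition walk_between :: "'a set \<Rightarrow> ('a \<Rightarrow> 'a \<Rightarrow> bool) \<Rightarrow> 'a \<Rightarrow> 'a \<Rightarrow> 'a list \<Rightarrow> bool" where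
  "walk_between V E x y xs \<longleftrightarrow> walk V E xs \<and> hd xs = x \<and> last xs = y"

definition connected_graph :: "'a set \<Rightarrow> ('a \<Rightarrow> 'a \<Rightarrow> bool) \<Rightarrow> bool" where
  "connected_graph V E \<longleftrightarrow> graph V E \<and> V \<noteq> {} \<and> (\<forall>x\<in>V. \<forall>y\<in>V. \<exists>xs. walk_between V E x y xs)"

definition gdist :: "'a set \<Rightarrow> ('a \<Rightarrow> 'a \<Rightarrow> bool) \<Rightarrow> 'a \<Rightarrow> 'a \<Rightarrow> nat" where
  "gdist V E x y = (LEAST n. \<exists>xs. walk_between V E x y xs \<and> length xs = Suc n)"

definition geodesic :: "'a set \<Rightarrow> ('a \<Rightarrow> 'a \<Rightarrow> bool) \<Rightarrow> 'a \<Rightarrow> 'a \<Rightarrow> 'a list \<Rightarrow> bool" where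
  "geodesic V E y z xs \<longleftrightarrow> walk_between V E y z xs \<and> length xs = Suc (gdist V E y z)"

definition on_geodesic :: "'a set \<Rightarrow> ('a \<Rightarrow> 'a \<Rightarrow> bool) \<Rightarrow> 'a \<Rightarrow> 'a \<Rightarrow> 'a \<Rightarrow> bool" where
  "on_geodesic V E x y z \<longleftrightarrow> (\<exists>xs. geodesic V E y z xs \<and> x \<in> set xs)"

definition strong_resolving :: "'a set \<Rightarrow> ('a \<Rightarrow> 'a \<Rightarrow> bool) \<Rightarrow> 'a set \<Rightarrow> bool" where
  "strong_resolving V E S \<longleftrightarrow> S \<subseteq> V \<and>
     (\<forall>x\<in>V. \<forall>y\<in>V. x \<noteq> y \<longrightarrow> (\<exists>z\<in>S. on_geodesic V E x y z \<or> on_geodesic V E y x z))"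

definition sdim :: "'a set \<Rightarrow> ('a \<Rightarrow> 'a \<Rightarrow> bool) \<Rightarrow> nat" where
  "sdim V E = Min (card ` {S. strong_resolving V E S})"

definition contains_srs :: "'a set \<Rightarrow> ('a \<Rightarrow> 'a \<Rightarrow> bool) \<Rightarrow> 'a set \<Rightarrow> bool" where
  "contains_srs V E M \<longleftrightarrow> (\<exists>S\<subseteq>M. strong_resolving V E S)"

text \<open>Position: Maker's vertices M, Breaker's
  vertices B; the Boolean flag says whether it is Maker's turn.
  maker_wins t M B: Maker has a winning strategy from this position.\<close>
inductive maker_wins :: "'a set \<Rightarrow> ('a \<Rightarrow> 'a \<Rightarrow> bool) \<Rightarrow> bool \<Rightarrow> 'a set \<Rightarrow> 'a set \<Rightarrow> bool"
  for V E where
  has_srs: "contains_srs V E M \<Longrightarrow> maker_wins V E t M B"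
| maker_move: "v \<in> V - M - B \<Longrightarrow> maker_wins V E False (insert v M) B \<Longrightarrow> maker_wins V E True M B"
| breaker_move: "V - M - B \<noteq> {} \<Longrightarrow> (\<forall>v\<in>V - M - B. maker_wins V E True M (insert v B))
     \<Longrightarrow> maker_wins V E False M B"

inductive breaker_wins :: "'a set \<Rightarrow> ('a \<Rightarrow> 'a \<Rightarrow> bool) \<Rightarrow> bool \<Rightarrow> 'a set \<Rightarrow> 'a set \<Rightarrow> bool"
  for V E where
  game_over: "V - M - B = {} \<Longrightarrow> \<not> contains_srs V E M \<Longrightarrow> breaker_wins V E t M B"
| breaker_move: "v \<in> V - M - B \<Longrightarrow> breaker_wins V E True M (insert v B) \<Longrightarrow> breaker_wins V E False M B"
| maker_move: "V - M - B \<noteq> {} \<Longrightarrow> (\<forall>v\<in>V - M - B. breaker_wins V E False (insert v M) B)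
     \<Longrightarrow> breaker_wins V E True M B"

definition outcome_M :: "'a set \<Rightarrow> ('a \<Rightarrow> 'a \<Rightarrow> bool) \<Rightarrow> bool" where
  "outcome_M V E \<longleftrightarrow> maker_wins V E True {} {} \<and> maker_wins V E False {} {}"

definition outcome_B :: "'a set \<Rightarrow> ('a \<Rightarrow> 'a \<Rightarrow> bool) \<Rightarrow> bool" where
  "outcome_B V E \<longleftrightarrow> breaker_wins V E True {} {} \<and> breaker_wins V E False {} {}"

end

theory Submission
  imports Defs
begin

text \<open>If the game is played until every vertex is claimed, Maker ends up with at most half of
  the vertices, rounded down when Breaker starts and up when Maker starts. Hence Maker can win
  the B-game only if some strong resolving set has at most \<open>\<lfloor>n/2\<rfloor>\<close> vertices, and if
  \<open>sdim(G) > \<lceil>n/2\<rceil>\<close> then Breaker wins both games by playing arbitrarily.\<close>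

definition maker_share :: "bool \<Rightarrow> nat \<Rightarrow> nat" where
  "maker_share t k = (if t then (k + 1) div 2 else k div 2)"
  \<comment> \<open>vertices Maker claims out of \<open>k\<close> free ones, \<open>t\<close> meaning Maker moves first\<close>

lemma maker_share_maker_move: "0 < k \<Longrightarrow> maker_share True k = Suc (maker_share False (k - 1))"
  by (simp add: maker_share_def)

lemma maker_share_breaker_move: "0 < k \<Longrightarrow> maker_share False k = maker_share True (k - 1)"
  by (simp add: maker_share_def)

lemma card_free_insert_maker:
  "finite V \<Longrightarrow> v \<in> V - M - B \<Longrightarrow> card (V - insert v M - B) = card (V - M - B) - 1"
  by (metis Diff_insert2 card_Diff_singleton finite_Diff Diff_insert)

lemma card_free_insert_breaker:
  "finite V \<Longrightarrow> v \<in> V - M - B \<Longrightarrow> card (V - M - insert v B) = card (V - M - B) - 1"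
  by (metis Diff_insert card_Diff_singleton finite_Diff)

lemma finite_strong_resolving_sets:
  "finite V \<Longrightarrow> finite {S. strong_resolving V E S}"
  by (rule finite_subset[of _ "Pow V"]) (auto simp: strong_resolving_def)

lemma sdim_le_card:
  "finite V \<Longrightarrow> strong_resolving V E S \<Longrightarrow> sdim V E \<le> card S"
  unfolding sdim_def by (auto intro: Min_le finite_strong_resolving_sets)

lemma card_le_if_contains_srs:
  assumes "finite M" "contains_srs V E M"
  obtains S where "strong_resolving V E S" "card S \<le> card M"
  using assms by (auto simp: contains_srs_def intro: card_mono)

lemma maker_wins_imp_small_strong_resolving:
  assumes "maker_wins V E t M B" "finite V" "M \<subseteq> V"
  shows "\<exists>S. strong_resolving V E S \<and> card S \<le> card M + maker_share t (card (V - M - B))"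
  using assms
proof (induction rule: maker_wins.induct)
  case (has_srs M t B)
  then obtain S where "strong_resolving V E S" "card S \<le> card M"
    by (meson card_le_if_contains_srs rev_finite_subset)
  then show ?case by (meson trans_le_add1)
next
  case (maker_move v M B)
  have "0 < card (V - M - B)"
    using maker_move.hyps(1) maker_move.prems(1) card_gt_0_iff by blast
  moreover have "card (insert v M) = Suc (card M)"
    using maker_move.hyps(1) maker_move.prems by (simp add: rev_finite_subset)
  ultimately show ?case
    using maker_move.IH maker_move.hyps(1) maker_move.prems
    by (simp add: card_free_insert_maker maker_share_maker_move)
next
  case (breaker_move M B)
  then obtain v where v: "v \<in> V - M - B" by blast
  have "0 < card (V - M - B)"
    using v breaker_move.prems(1) card_gt_0_iff by blast
  then show ?case
    using breaker_move.IH v breaker_move.prems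
    by (simp add: card_free_insert_breaker maker_share_breaker_move)
qed

lemma breaker_wins_if_sdim_large:
  assumes "finite V" "M \<subseteq> V" "card M + maker_share t (card (V - M - B)) < sdim V E"
  shows "breaker_wins V E t M B"
  using assms
proof (induction "card (V - M - B)" arbitrary: t M B)
  case 0
  have "\<not> contains_srs V E M"
  proof
    assume "contains_srs V E M"
    then obtain S where "strong_resolving V E S" "card S \<le> card M"
      using 0 by (meson card_le_if_contains_srs rev_finite_subset)
    then show False using 0 sdim_le_card by fastforce
  qed
  moreover have "V - M - B = {}" using "0.hyps" "0.prems"(1) by simp
  ultimately show ?case by (rule breaker_wins.game_over[rotated])
next
  case (Suc k)
  have free: "V - M - B \<noteq> {}" using Suc.hyps(2) by (metis card.empty Zero_neq_Suc)
  show ?case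
  proof (cases t)
    case True
    have "breaker_wins V E False (insert v M) B" if v: "v \<in> V - M - B" for v
    proof (rule Suc.hyps(1))
      have "card (insert v M) = Suc (card M)"
        using v Suc.prems by (simp add: rev_finite_subset)
      then show "card (insert v M) + maker_share False (card (V - insert v M - B)) < sdim V E"
        using Suc v True by (simp add: card_free_insert_maker maker_share_maker_move)
    qed (use Suc v in \<open>simp_all add: card_free_insert_maker\<close>)
    then show ?thesis using True free by (simp add: breaker_wins.maker_move)
  next
    case False
    obtain v where v: "v \<in> V - M - B" using free by blast
    have "breaker_wins V E True M (insert v B)"
      using Suc v False
      by (intro Suc.hyps(1)) (simp_all add: card_free_insert_breaker maker_share_breaker_move)
    then show ?thesis using False v by (simp add: breaker_wins.breaker_move)
  qed
qed

lemma ceiling_half_of_nat: "\<lceil>real n / 2\<rceil> = int ((n + 1) div 2)"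
  by (simp add: ceiling_eq_iff) linarith

theorem mainTheorem7:
  fixes V :: "'a set" and E :: "'a \<Rightarrow> 'a \<Rightarrow> bool"
  assumes "connected_graph V E" and "card V \<ge> 2"
  shows "(outcome_M V E \<longrightarrow> int (sdim V E) \<le> \<lfloor>real (card V) / 2\<rfloor>)
       \<and> (int (sdim V E) \<ge> \<lceil>real (card V) / 2\<rceil> + 1 \<longrightarrow> outcome_B V E)"
proof -
  have fin: "finite V" using assms(1) by (simp add: connected_graph_def graph_def)
  show ?thesis
  proof (intro conjI impI)
    assume "outcome_M V E"
    then obtain S where "strong_resolving V E S" "card S \<le> card V div 2"
      using maker_wins_imp_small_strong_resolving[of V E False "{}" "{}"] fin
      by (auto simp: outcome_M_def maker_share_def)
    then have "sdim V E \<le> card V div 2" using fin sdim_le_card le_trans by blast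
    then show "int (sdim V E) \<le> \<lfloor>real (card V) / 2\<rfloor>"
      by (metis floor_divide_of_nat_eq of_nat_le_iff of_nat_numeral of_int_of_nat_eq)
  next
    assume "int (sdim V E) \<ge> \<lceil>real (card V) / 2\<rceil> + 1"
    then have "maker_share t (card V) < sdim V E" for t
      by (auto simp: ceiling_half_of_nat maker_share_def)
    then show "outcome_B V E"
      using breaker_wins_if_sdim_large[of V "{}"] fin by (simp add: outcome_B_def)
  qed
qed

end
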